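(* Let $f_1,\ldots,f_{KN}$ be drawn i.i.d. from a distribution $\mathcal{F}$ over types, let $\widehat{p}(\mathbf{b}^{(i)})=\frac1N\sum_{\tau=1}^N\mathbb{1}\{b_{f_{(i-1)N+\tau}}(\mathbf{x}^{(\mathbf{b}^{(i)})})=a^{(\mathbf{b}^{(i)})}\}$ for $i\in[K]$, and $\widehat{p}(\mathbf{w})=\sum_{i=1}^K\lambda_i(\mathbf{w})\widehat{p}(\mathbf{b}^{(i)})$ for $\mathbf{w}\in\mathcal{W}$. Let $p(\mathbf{w})=\sum_{i=1}^K\mathbf{w}[i]\Pr_{f\sim\mathcal{F}}(f=\alpha^{(i)})$. Then for any sequence of mixed strategies $\mathbf{x}_{NK+1},\ldots,\mathbf{x}_T$, with probability at least $1-\frac1T$, $$\sum_{t=NK+1}^T\sum_{a_f\in\mathcal{A}_f}\big|\widehat{p}(\mathbb{1}_{(\sigma^{(\mathbf{x}_t)}=a_f)})-p(\mathbb{1}_{(\sigma^{(\mathbf{x}_t)}=a_f)})\big|\le 2A_fT\sqrt{\frac{K\log T}{N}}.$$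
   Context: Finite leader actions $\mathcal{A}$, finite follower actions $\mathcal{A}_f$ with $A_f=|\mathcal{A}_f|$, follower types $\alpha^{(1)},\ldots,\alpha^{(K)}$ with context-independent utilities $u_{\alpha^{(i)}}:\mathcal{A}\times\mathcal{A}_f\to[0,1]$; for $\mathbf{x}\in\Delta(\mathcal{A})$, $b_f(\mathbf{x})\in\arg\max_{a_f}\sum_{a_l}\mathbf{x}[a_l]u_f(a_l,a_f)$, ties broken by a fixed ordering. $\sigma^{(\mathbf{x})}$ maps $\alpha^{(i)}\mapsto b_{\alpha^{(i)}}(\mathbf{x})$; $\Sigma=\{\sigma^{(\mathbf{x})}\}$. For $\sigma\in\Sigma$, $a_f\in\mathcal{A}_f$, $\mathbb{1}_{(\sigma=a_f)}\in\{0,1\}^K$ has $i$-th entry $\mathbb{1}\{\sigma(\alpha^{(i)})=a_f\}$; $\mathcal{W}$ is the set of these vectors. $\mathcal{B}=\{\mathbf{b}^{(1)},\ldots,\mathbf{b}^{(K)}\}\subseteq\mathcal{W}$ is a barycentric spanner (each $\mathbf{w}\in\mathcal{W}$ equals $\sum_i\lambda_i(\mathbf{w})\mathbf{b}^{(i)}$ with $\lambda_i(\mathbf{w})\in[-1,1]$), and $\mathbf{x}^{(\mathbf{b})},a^{(\mathbf{b})}$ satisfy $\mathbf{b}=\mathbb{1}_{(\sigma^{(\mathbf{x}^{(\mathbf{b})})}=a^{(\mathbf{b})})}$. Here $T\ge KN$. *)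

theory Defs
  imports "HOL-Probability.Probability"
begin

definition mixed_strategies :: "('l::finite \<Rightarrow> real) set" where
  "mixed_strategies = {x. (\<forall>a. 0 \<le> x a) \<and> (\<Sum>a\<in>UNIV. x a) = 1}"

definition exp_util :: "('l::finite \<Rightarrow> 'f \<Rightarrow> real) \<Rightarrow> ('l \<Rightarrow> real) \<Rightarrow> 'f \<Rightarrow> real" where
  "exp_util u x af = (\<Sum>al\<in>UNIV. x al * u al af)"

definition best_resp :: "('l::finite \<Rightarrow> 'f::{finite,linorder} \<Rightarrow> real) \<Rightarrow> ('l \<Rightarrow> real) \<Rightarrow> 'f" where
  "best_resp u x = (LEAST af. \<forall>af'. exp_util u x af' \<le> exp_util u x af)"

text \<open>The indicator vector 1_(sigma^(x) = af) in {0,1}^K, types indexed by 0..K-1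
  (entries outside {..<K} are 0).\<close>
definition resp_vec :: "(nat \<Rightarrow> 'l::finite \<Rightarrow> 'f::{finite,linorder} \<Rightarrow> real) \<Rightarrow> nat \<Rightarrow> ('l \<Rightarrow> real) \<Rightarrow> 'f \<Rightarrow> (nat \<Rightarrow> real)" where
  "resp_vec u K x af = (\<lambda>j. if j < K \<and> best_resp (u j) x = af then 1 else 0)"

definition resp_vecs :: "(nat \<Rightarrow> 'l::finite \<Rightarrow> 'f::{finite,linorder} \<Rightarrow> real) \<Rightarrow> nat \<Rightarrow> (nat \<Rightarrow> real) set" where
  "resp_vecs u K = {resp_vec u K x af | x af. x \<in> mixed_strategies}"

end

theory Submission
  imports Defs
begin

text \<open>For a fixed response vector w = sum_i lambda_i(w) b^(i), the error of the estimate of p(w)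
  is a sum of K N independent terms, one per sampled follower, each confined to an interval of
  width 1/N because |lambda_i(w)| <= 1. Hoeffding's inequality bounds the probability of an error
  of at least 2 sqrt(K log T / N) by 2/T^8. Only the at most (T - K N)(K + 1) <= 2 T^2 distinct
  vectors 1_(sigma^(x_t) = a_f) matter, since a response chosen by no type gives the zero vector,
  so a union bound leaves failure probability at most 1/T; outside the failure event each of the
  at most T A_f summands is below 2 sqrt(K log T / N).\<close>

definition block_mean :: "nat \<Rightarrow> ('a \<Rightarrow> real) \<Rightarrow> (nat \<Rightarrow> 'a) \<Rightarrow> nat \<Rightarrow> real" where
  "block_mean N h f i = 1 / real N * (\<Sum>\<tau><N. h (f (i * N + \<tau>)))"

lemma sum_lessThan_mult_blocks:
  fixes h :: "nat \<Rightarrow> 'b::comm_monoid_add"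
  shows "(\<Sum>k<K * N. h k) = (\<Sum>i<K. \<Sum>\<tau><N. h (i * N + \<tau>))"
proof -
  have "(\<Sum>k<K * N. h k) = (\<Sum>i<K. \<Sum>k\<in>{i * N..<i * N + N}. h k)"
    by (rule sum.nat_group[symmetric])
  also have "\<dots> = (\<Sum>i<K. \<Sum>\<tau><N. h (i * N + \<tau>))"
    by (simp add: sum.atLeastLessThan_shift_0[where m = "_ * N"] atLeast0LessThan comp_def)
  finally show ?thesis .
qed

lemma prob_weighted_block_means_deviation_ge:
  fixes D :: "'a pmf" and g :: "nat \<Rightarrow> 'a \<Rightarrow> real" and c :: "nat \<Rightarrow> real"
  assumes "K > 0" "N > 0" "\<epsilon> \<ge> 0"
    and c_le: "\<And>i. i < K \<Longrightarrow> \<bar>c i\<bar> \<le> 1"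
    and g_range: "\<And>i x. i < K \<Longrightarrow> g i x \<in> {0..1}"
  shows "measure_pmf.prob (Pi_pmf {..<K * N} dflt (\<lambda>_. D))
     {f. \<epsilon> \<le> \<bar>(\<Sum>i<K. c i * block_mean N (g i) f i) - (\<Sum>i<K. c i * measure_pmf.expectation D (g i))\<bar>}
     \<le> 2 * exp (- 2 * \<epsilon>\<^sup>2 * real N / real K)"
proof -
  define P where "P = Pi_pmf {..<K * N} dflt (\<lambda>_. D)"
  define X where "X k f = c (k div N) / real N * g (k div N) (f k)" for k and f :: "nat \<Rightarrow> 'a"
  define a where "a k = min 0 (c (k div N)) / real N" for k
  define b where "b k = a k + 1 / real N" for k
  have "prob_space.indep_vars (measure_pmf P) (\<lambda>_. count_space UNIV) (\<lambda>k f. f k) {..<K * N}"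
    unfolding P_def by (rule indep_vars_Pi_pmf) simp
  then have "prob_space.indep_vars (measure_pmf P) (\<lambda>_. borel) X {..<K * N}"
    unfolding X_def by (rule prob_space.indep_vars_compose2[OF measure_pmf.prob_space_axioms]) auto
  moreover have "X k f \<in> {a k..b k}" if "k < K * N" for k f
  proof -
    have "k div N < K" using that by (simp add: less_mult_imp_div_less)
    then show ?thesis
      using c_le[of "k div N"] g_range[of "k div N" "f k"] \<open>N > 0\<close>
      unfolding X_def a_def b_def
      by (auto simp: min_def divide_simps intro: mult_le_one order.trans[OF mult_nonpos_nonneg])
  qed
  ultimately interpret Hoeffding_ineq "measure_pmf P" "{..<K * N}" X a b
      "\<Sum>k<K * N. measure_pmf.expectation P (X k)"
    by unfold_locales auto
  have "(\<Sum>k<K * N. X k f) = (\<Sum>i<K. c i * block_mean N (g i) f i)" for f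
    using \<open>N > 0\<close> by (simp add: sum_lessThan_mult_blocks X_def block_mean_def sum_distrib_left)
  moreover have "(\<Sum>k<K * N. measure_pmf.expectation P (X k))
      = (\<Sum>i<K. c i * measure_pmf.expectation D (g i))"
  proof -
    have "measure_pmf.expectation P (X k)
        = c (k div N) / real N * measure_pmf.expectation D (g (k div N))"
      if "k < K * N" for k
    proof -
      have "map_pmf (\<lambda>f. f k) P = D" unfolding P_def using that by (simp add: Pi_pmf_component)
      then show ?thesis unfolding X_def by (metis integral_map_pmf integral_mult_right_zero)
    qed
    then show ?thesis using \<open>N > 0\<close> by (simp add: sum_lessThan_mult_blocks)
  qed
  moreover have "(\<Sum>k<K * N. (b k - a k)\<^sup>2) = real K / real N"
    using \<open>N > 0\<close> by (simp add: b_def power2_eq_square)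
  ultimately show ?thesis
    using Hoeffding_ineq_abs_ge[OF \<open>\<epsilon> \<ge> 0\<close>] \<open>K > 0\<close> \<open>N > 0\<close> unfolding P_def by simp
qed

lemma pmf_weight_spanner_combination:
  assumes "set_pmf D \<subseteq> {..<K}"
    and "w = (\<lambda>j. \<Sum>i<K. lam i * resp_vec u K (x i) (a i) j)"
  shows "(\<Sum>j<K. w j * pmf D j) =
    (\<Sum>i<K. lam i * measure_pmf.expectation D (\<lambda>j. if best_resp (u j) (x i) = a i then 1 else 0))"
proof -
  have expectation_eq: "(\<Sum>j<K. resp_vec u K (x i) (a i) j * pmf D j)
      = measure_pmf.expectation D (\<lambda>j. if best_resp (u j) (x i) = a i then 1 else 0)" for i
    by (subst integral_measure_pmf_real[where A = "{..<K}"])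
      (use assms(1) in \<open>auto simp: resp_vec_def\<close>)
  have "(\<Sum>j<K. w j * pmf D j) = (\<Sum>j<K. \<Sum>i<K. lam i * (resp_vec u K (x i) (a i) j * pmf D j))"
    unfolding assms(2) by (simp add: sum_distrib_right mult.assoc)
  also have "\<dots> = (\<Sum>i<K. lam i * (\<Sum>j<K. resp_vec u K (x i) (a i) j * pmf D j))"
    by (subst sum.swap) (simp add: sum_distrib_left)
  finally show ?thesis by (simp only: expectation_eq)
qed

lemma prob_spanner_estimate_deviation_ge:
  assumes "K > 0" "N > 0" "\<epsilon> \<ge> 0" "set_pmf D \<subseteq> {..<K}"
    and lam_le: "\<forall>i<K. \<bar>lam i\<bar> \<le> 1"
    and spanned: "w = (\<lambda>j. \<Sum>i<K. lam i * resp_vec u K (xb i) (ab i) j)"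
  shows "measure_pmf.prob (Pi_pmf {..<K * N} dflt (\<lambda>_. D))
     {f. \<epsilon> \<le> \<bar>(\<Sum>i<K. lam i * block_mean N (\<lambda>j. if best_resp (u j) (xb i) = ab i then 1 else 0) f i)
               - (\<Sum>j<K. w j * pmf D j)\<bar>}
     \<le> 2 * exp (- 2 * \<epsilon>\<^sup>2 * real N / real K)"
  unfolding pmf_weight_spanner_combination[OF assms(4) spanned]
  using assms by (intro prob_weighted_block_means_deviation_ge) auto

lemma exp_Hoeffding_exponent_log_radius:
  assumes "K > 0" "N > 0" "T \<ge> 1"
  shows "exp (- 2 * (2 * sqrt (real K * ln (real T) / real N))\<^sup>2 * real N / real K)
    = 1 / real T ^ 8"
proof -
  have "- 2 * (2 * sqrt (real K * ln (real T) / real N))\<^sup>2 * real N / real K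
      = - (real 8 * ln (real T))"
    using assms by (simp add: power_mult_distrib)
  moreover have "exp (real 8 * ln (real T)) = real T ^ 8"
    using assms by (subst exp_of_nat_mult) simp
  ultimately show ?thesis
    by (simp add: exp_minus inverse_eq_divide)
qed

lemma card_range_resp_vec_le: "card (range (resp_vec u K x)) \<le> Suc K"
proof -
  let ?played = "(\<lambda>j. resp_vec u K x (best_resp (u j) x)) ` {..<K}"
  have "resp_vec u K x af \<in> insert (\<lambda>_. 0) ?played" for af
  proof (cases "\<exists>j<K. best_resp (u j) x = af")
    case False
    then have "resp_vec u K x af = (\<lambda>_. 0)" by (auto simp: resp_vec_def)
    then show ?thesis by simp
  qed auto
  then have "card (range (resp_vec u K x)) \<le> card (insert (\<lambda>_. 0) ?played)"
    by (intro card_mono) auto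
  also have "\<dots> \<le> Suc K"
    using card_image_le[of "{..<K}" "\<lambda>j. resp_vec u K x (best_resp (u j) x)"]
    by (simp add: card_insert_if)
  finally show ?thesis .
qed

lemma card_resp_vecs_of_sequence_le:
  assumes "finite I"
  shows "card ((\<lambda>(t, af). resp_vec u K (xs t) af) ` (I \<times> UNIV)) \<le> card I * Suc K"
proof -
  have "(\<lambda>(t, af). resp_vec u K (xs t) af) ` (I \<times> UNIV) = (\<Union>t\<in>I. range (resp_vec u K (xs t)))"
    by auto
  also have "card \<dots> \<le> (\<Sum>t\<in>I. card (range (resp_vec u K (xs t))))"
    by (rule card_UN_le[OF assms])
  also have "\<dots> \<le> card I * Suc K"
    using sum_bounded_above[of I "\<lambda>t. card (range (resp_vec u K (xs t)))" "Suc K"]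
    by (simp add: card_range_resp_vec_le)
  finally show ?thesis .
qed

lemma prob_sum_abs_le_union_bound:
  fixes P :: "'a pmf" and Z :: "'w \<Rightarrow> 'a \<Rightarrow> real" and W :: "'t \<Rightarrow> 's \<Rightarrow> 'w"
  assumes "finite I" "finite J" "real (card I * card J) * \<epsilon> \<le> B"
    and dev: "\<And>t s. t \<in> I \<Longrightarrow> s \<in> J \<Longrightarrow> measure_pmf.prob P {f. \<epsilon> \<le> \<bar>Z (W t s) f\<bar>} \<le> \<delta>"
  shows "measure_pmf.prob P {f. (\<Sum>t\<in>I. \<Sum>s\<in>J. \<bar>Z (W t s) f\<bar>) \<le> B}
    \<ge> 1 - real (card (case_prod W ` (I \<times> J))) * \<delta>"
proof -
  define S where "S = case_prod W ` (I \<times> J)"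
  define bad where "bad = (\<Union>w\<in>S. {f. \<epsilon> \<le> \<bar>Z w f\<bar>})"
  have "measure_pmf.prob P bad \<le> (\<Sum>w\<in>S. measure_pmf.prob P {f. \<epsilon> \<le> \<bar>Z w f\<bar>})"
    unfolding bad_def
    by (rule measure_pmf.finite_measure_subadditive_finite) (auto simp: S_def assms)
  also have "\<dots> \<le> (\<Sum>w\<in>S. \<delta>)"
    by (intro sum_mono) (auto simp: S_def dev)
  finally have "1 - real (card S) * \<delta> \<le> measure_pmf.prob P (UNIV - bad)"
    using measure_pmf.prob_compl[of bad P] by simp
  also have "\<dots> \<le> measure_pmf.prob P {f. (\<Sum>t\<in>I. \<Sum>s\<in>J. \<bar>Z (W t s) f\<bar>) \<le> B}"
  proof (rule measure_pmf.finite_measure_mono, safe)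
    fix f assume "f \<notin> bad"
    then have "\<bar>Z (W t s) f\<bar> \<le> \<epsilon>" if "t \<in> I" "s \<in> J" for t s
      using that unfolding bad_def S_def by force
    then have "(\<Sum>t\<in>I. \<Sum>s\<in>J. \<bar>Z (W t s) f\<bar>) \<le> (\<Sum>t\<in>I. \<Sum>s\<in>J. \<epsilon>)"
      by (intro sum_mono) auto
    then show "(\<Sum>t\<in>I. \<Sum>s\<in>J. \<bar>Z (W t s) f\<bar>) \<le> B"
      using assms(3) by simp
  qed simp
  finally show ?thesis unfolding S_def .
qed

lemma linear_count_times_tail_le_inverse:
  assumes "T \<ge> 2" "K \<le> T" "n \<le> T * Suc K"
  shows "real n * (2 / real T ^ 8) \<le> 1 / real T"
proof -
  have "T * Suc K \<le> T * (2 * T)"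
    using assms(1,2) by (intro mult_le_mono2) linarith
  with assms(3) have "n \<le> T * (2 * T)"
    by (rule le_trans)
  then have "real n \<le> real (T * (2 * T))"
    by (rule of_nat_mono)
  then have "real n * 2 * real T \<le> 2 * real T ^ 2 * 2 * real T"
    by (intro mult_right_mono) (auto simp: power2_eq_square)
  also have "\<dots> = 4 * real T ^ 3"
    by (simp add: power2_eq_square power3_eq_cube)
  also have "\<dots> \<le> real T ^ 5 * real T ^ 3"
    using power_mono[of 2 "real T" 5] assms(1) by (intro mult_right_mono) auto
  finally have "real n * 2 * real T \<le> real T ^ 8"
    by (simp flip: power_add)
  then show ?thesis
    using assms(1) by (simp add: field_simps)
qed

theorem mainTheorem10:
  fixes u :: "nat \<Rightarrow> 'l::finite \<Rightarrow> 'f::{finite,linorder} \<Rightarrow> real"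
    and K N T :: nat
    and D :: "nat pmf"
    and xb :: "nat \<Rightarrow> ('l \<Rightarrow> real)" and ab :: "nat \<Rightarrow> 'f"
    and lam :: "(nat \<Rightarrow> real) \<Rightarrow> nat \<Rightarrow> real"
    and xs :: "nat \<Rightarrow> ('l \<Rightarrow> real)"
  assumes K_pos: "K \<ge> 1" and N_pos: "N \<ge> 1" and T_ge: "T \<ge> K * N"
    and u_range: "\<And>i al af. i < K \<Longrightarrow> 0 \<le> u i al af \<and> u i al af \<le> 1"
    and D_supp: "set_pmf D \<subseteq> {..<K}"
    and xb_mixed: "\<And>i. i < K \<Longrightarrow> xb i \<in> mixed_strategies"
    and spanner: "\<And>w. w \<in> resp_vecs u K \<Longrightarrow>
        (\<forall>i<K. \<bar>lam w i\<bar> \<le> 1) \<and>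
        w = (\<lambda>j. \<Sum>i<K. lam w i * resp_vec u K (xb i) (ab i) j)"
    and xs_mixed: "\<And>t. K * N + 1 \<le> t \<Longrightarrow> t \<le> T \<Longrightarrow> xs t \<in> mixed_strategies"
  shows "measure_pmf.prob (Pi_pmf {..<K * N} 0 (\<lambda>_. D))
     {f. let phat_b = (\<lambda>i. (1 / real N) *
                 (\<Sum>\<tau><N. if best_resp (u (f (i * N + \<tau>))) (xb i) = ab i then 1 else 0));
             phat = (\<lambda>w. \<Sum>i<K. lam w i * phat_b i);
             p = (\<lambda>w. \<Sum>i<K. w i * pmf D i)
         in (\<Sum>t\<in>{K * N + 1..T}. \<Sum>af\<in>UNIV.
                \<bar>phat (resp_vec u K (xs t) af) - p (resp_vec u K (xs t) af)\<bar>)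
            \<le> 2 * real CARD('f) * real T * sqrt (real K * ln (real T) / real N)}
     \<ge> 1 - 1 / real T"
proof (cases "T = 1")
  case True
  then show ?thesis by simp
next
  case False
  have "K \<le> K * N" using N_pos by simp
  with False K_pos T_ge have "T \<ge> 2" "K \<le> T" by linarith+
  define I where "I = {K * N + 1..T}"
  define \<epsilon> where "\<epsilon> = 2 * sqrt (real K * ln (real T) / real N)"
  define Z where "Z w f =
    (\<Sum>i<K. lam w i * block_mean N (\<lambda>j. if best_resp (u j) (xb i) = ab i then 1 else 0) f i)
      - (\<Sum>j<K. w j * pmf D j)" for w f
  have "measure_pmf.prob (Pi_pmf {..<K * N} 0 (\<lambda>_. D)) {f. \<epsilon> \<le> \<bar>Z (resp_vec u K (xs t) af) f\<bar>}
      \<le> 2 * exp (- 2 * \<epsilon>\<^sup>2 * real N / real K)" if "t \<in> I" for t af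
  proof -
    have "resp_vec u K (xs t) af \<in> resp_vecs u K"
      using xs_mixed that unfolding I_def resp_vecs_def by auto
    then show ?thesis
      unfolding Z_def using spanner K_pos N_pos D_supp \<open>T \<ge> 2\<close>
      by (intro prob_spanner_estimate_deviation_ge) (auto simp: \<epsilon>_def)
  qed
  moreover have "exp (- 2 * \<epsilon>\<^sup>2 * real N / real K) = 1 / real T ^ 8"
    unfolding \<epsilon>_def using K_pos N_pos \<open>T \<ge> 2\<close> by (intro exp_Hoeffding_exponent_log_radius) auto
  moreover have "real (card I * CARD('f)) * \<epsilon>
      \<le> 2 * real CARD('f) * real T * sqrt (real K * ln (real T) / real N)"
    unfolding I_def \<epsilon>_def using \<open>T \<ge> 2\<close> by (simp, intro mult_right_mono) auto
  ultimately have "measure_pmf.prob (Pi_pmf {..<K * N} 0 (\<lambda>_. D))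
      {f. (\<Sum>t\<in>I. \<Sum>af\<in>UNIV. \<bar>Z (resp_vec u K (xs t) af) f\<bar>)
        \<le> 2 * real CARD('f) * real T * sqrt (real K * ln (real T) / real N)}
    \<ge> 1 - real (card ((\<lambda>(t, af). resp_vec u K (xs t) af) ` (I \<times> UNIV))) * (2 / real T ^ 8)"
    by (intro prob_sum_abs_le_union_bound) (auto simp: I_def)
  moreover have "real (card ((\<lambda>(t, af). resp_vec u K (xs t) af) ` (I \<times> UNIV))) * (2 / real T ^ 8)
      \<le> 1 / real T"
    using card_resp_vecs_of_sequence_le[of I u K xs] mult_le_mono1[of "card I" T "Suc K"]
      \<open>T \<ge> 2\<close> \<open>K \<le> T\<close>
    by (intro linear_count_times_tail_le_inverse[where K = K]) (auto simp: I_def)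
  ultimately show ?thesis
    by (simp add: Z_def block_mean_def I_def Let_def)
qed

end
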